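(* Let $m,M\in\{0.01,0.02,\dots,0.99\}$ with $m\le M$ and $\varepsilon\in\{0,0.01,\dots,1.99,2\}\cup\{2.1,2.2,\dots,10\}\cup\{11,12,\dots,100\}$. For integers $N>1$, $J\subseteq[N]$, $a=(a_1,\dots,a_N)\in[m,M]^N$ and $z=(z_1,\dots,z_N)\in[m,M]^N$, let \[ g_{J,N}(a;z)=\Big(e^{-\varepsilon}+(1-e^{-\varepsilon})\frac{m+\sum_{i=1}^Na_i}{N+1}\Big)^{-1}\prod_{i\in J}\frac{N+1}{N+\frac{a_i}{z_i}}\prod_{i\in[N]\setminus J}\frac{N+1}{N+\frac{1-a_i}{1-z_i}}. \] Then \[ \sup_{N>1}\max_{J\subseteq[N]}\max_{a\in[m,M]^N}\max_{z\in[m,M]^N}g_{J,N}(a;z)=\max\Big\{\big(e^{-\varepsilon}+(1-e^{-\varepsilon})M\big)^{-1}e^{1-\frac{1-M}{1-m}},\ \big(e^{-\varepsilon}+(1-e^{-\varepsilon})m\big)^{-1}e^{1-\frac{m}{M}}\Big\}. \]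
   Context: $[N]=\{1,\dots,N\}$. *)

theory Defs
  imports Complex_Main
begin

definition mgrid :: "real set" where
  "mgrid = {real k / 100 | k::nat. 1 \<le> k \<and> k \<le> 99}"

definition eps_grid :: "real set" where
  "eps_grid = {real k / 100 | k::nat. k \<le> 200}
            \<union> {real k / 10 | k::nat. 21 \<le> k \<and> k \<le> 100}
            \<union> {real k | k::nat. 11 \<le> k \<and> k \<le> 100}"

definition gfun :: "real \<Rightarrow> real \<Rightarrow> nat set \<Rightarrow> nat \<Rightarrow> (nat \<Rightarrow> real) \<Rightarrow> (nat \<Rightarrow> real) \<Rightarrow> real" where
  "gfun \<epsilon> m J N a z =
     inverse (exp (-\<epsilon>) + (1 - exp (-\<epsilon>)) * ((m + (\<Sum>i=1..N. a i)) / (real N + 1)))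
     * (\<Prod>i\<in>J. (real N + 1) / (real N + a i / z i))
     * (\<Prod>i\<in>{1..N} - J. (real N + 1) / (real N + (1 - a i) / (1 - z i)))"

definition gvals :: "real \<Rightarrow> real \<Rightarrow> real \<Rightarrow> real set" where
  "gvals \<epsilon> m M = {gfun \<epsilon> m J N a z | J N a z.
      N > 1 \<and> J \<subseteq> {1..N} \<and>
      (\<forall>i\<in>{1..N}. a i \<in> {m..M}) \<and> (\<forall>i\<in>{1..N}. z i \<in> {m..M})}"

end

theory Submission
  imports Defs "HOL-Analysis.Convex" "HOL-Real_Asymp.Real_Asymp"
begin

(* Write c = exp (-\<epsilon>), w = c + (1 - c) m, W = c + (1 - c) M and s_i = (a_i - m) / (M - m).
   The map x \<mapsto> ln ((N + 1) / (N + x)) is convex and decreasing, and both a_i / z_i and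
   (1 - a_i) / (1 - z_i) dominate (1 - s_i) m / M + s_i (1 - M) / (1 - m); so the log of every
   factor of the product is at most the s_i-interpolation of its values at m / M and
   (1 - M) / (1 - m). The prefactor is the reciprocal of the \<theta>-interpolation of w and
   (w + N W) / (N + 1), \<theta> being the mean of the s_i, so by concavity of ln the value ln g is
   at most the \<theta>-interpolation of ln g at the two vertices a = m, z = M, J = [N] and
   a = M, z = m, J = {}. At the first vertex, ((N + 1) / (N + p))^N \<le> e^(1 - p) with p = m / M
   bounds g by the second term of the max; at the second, a sharper estimate built from Pade
   approximants of ln bounds it by the max. Conversely, the two terms are the limits of g at
   these vertices as N \<rightarrow> \<infinity>. *)

lemma ln_add_one_le_pade:
  fixes y :: real
  assumes "0 \<le> y"
  shows "ln (1 + y) \<le> y * (6 + y) / (6 + 4 * y)"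
proof -
  let ?f = "\<lambda>x::real. x * (6 + x) / (6 + 4 * x) - ln (1 + x)"
  have "?f 0 \<le> ?f y"
  proof (rule DERIV_nonneg_imp_nondecreasing[OF assms])
    fix x :: real
    assume x: "0 \<le> x" "x \<le> y"
    have "DERIV ?f x :> ((6 + 2*x) * (6 + 4*x) - 4 * (x * (6 + x))) / (6 + 4*x)^2 - 1 / (1 + x)"
      using x by (auto intro!: derivative_eq_intros simp: power2_eq_square)
    moreover have "((6 + 2*x) * (6 + 4*x) - 4 * (x * (6 + x))) / (6 + 4*x)^2 - 1 / (1 + x)
        = 4 * x^3 / ((6 + 4*x)^2 * (1 + x))"
      using x by (simp add: divide_simps power2_eq_square power3_eq_cube) algebra
    moreover have "0 \<le> 4 * x^3 / ((6 + 4*x)^2 * (1 + x))"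
      using x by simp
    ultimately show "\<exists>d. DERIV ?f x :> d \<and> 0 \<le> d"
      by metis
  qed
  then show ?thesis
    by simp
qed

lemma ln_le_pade:
  fixes q :: real
  assumes "0 < q" "q \<le> 1"
  shows "ln q \<le> 2 * (q - 1) / (q + 1)"
proof -
  let ?f = "\<lambda>x::real. 2 * (x - 1) / (x + 1) - ln x"
  have "?f 1 \<le> ?f q"
  proof (rule DERIV_nonpos_imp_nonincreasing[OF assms(2)])
    fix x :: real
    assume x: "q \<le> x" "x \<le> 1"
    have "DERIV ?f x :> (2 * (x + 1) - 2 * (x - 1)) / (x + 1)^2 - 1 / x"
      using x assms by (auto intro!: derivative_eq_intros simp: power2_eq_square)
    moreover have "(2 * (x + 1) - 2 * (x - 1)) / (x + 1)^2 - 1 / x = - ((x - 1)^2 / (x * (x + 1)^2))"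
      using x assms by (simp add: divide_simps power2_eq_square) algebra
    moreover have "0 \<le> (x - 1)^2 / (x * (x + 1)^2)"
      using x assms by simp
    ultimately show "\<exists>d. DERIV ?f x :> d \<and> d \<le> 0"
      by (metis neg_le_0_iff_le)
  qed
  then show ?thesis
    by simp
qed

lemma ln_convex_comb_ge:
  fixes x y l :: real
  assumes "0 < x" "0 < y" "0 \<le> l" "l \<le> 1"
  shows "(1 - l) * ln x + l * ln y \<le> ln ((1 - l) * x + l * y)"
proof -
  have "convex_on {0<..} (\<lambda>x. - ln x)"
    using ln_concave by (simp add: concave_on_def)
  from convex_onD[OF this, of l x y] assms show ?thesis
    by (simp add: algebra_simps)
qed

lemma mult_ln_ratio_le:
  fixes n p :: real
  assumes "0 \<le> n" "0 < p" "p \<le> 1"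
  shows "n * ln ((n + 1) / (n + p)) \<le> 1 - p"
proof -
  have "ln ((n + 1) / (n + p)) = ln (1 + (1 - p) / (n + p))"
    using assms by (simp add: field_simps)
  also have "\<dots> \<le> (1 - p) / (n + p)"
    using assms by (intro ln_add_one_self_le_self) simp
  finally have "n * ln ((n + 1) / (n + p)) \<le> n * ((1 - p) / (n + p))"
    using assms by (intro mult_left_mono) auto
  also have "\<dots> \<le> 1 - p"
    using assms mult_nonneg_nonneg[of "1 - p" p] by (simp add: divide_simps algebra_simps)
  finally show ?thesis .
qed

(* Any q satisfying both mult_ln_ratio_add_ln_ratio_le and ln_pade_threshold_le can serve as the
   threshold of the case split in mult_ln_ratio_add_ln_ratio_le_max; this one makes both provable
   from Pade bounds for ln. *)
definition pade_threshold :: "real \<Rightarrow> real" where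
  "pade_threshold t = 1 - t / 2 + t^2 / 20"

lemma pade_threshold_bounds:
  assumes "0 \<le> t" "t \<le> 1"
  shows "1 / 2 \<le> pade_threshold t" "pade_threshold t \<le> 1"
proof -
  have "t^2 \<le> t"
    using assms by (simp add: power2_eq_square mult_left_le_one_le)
  with assms zero_le_power2[of t] show "1 / 2 \<le> pade_threshold t" "pade_threshold t \<le> 1"
    unfolding pade_threshold_def by linarith+
qed

lemma ln_pade_threshold_le:
  assumes "0 \<le> t" "t \<le> 1"
  shows "ln (pade_threshold t) \<le> 1 - t - pade_threshold t"
proof -
  define q where "q = pade_threshold t"
  have q: "1 / 2 \<le> q" "q \<le> 1"
    using pade_threshold_bounds[OF assms] by (simp_all add: q_def)
  have "ln q \<le> 2 * (q - 1) / (q + 1)"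
    using q by (intro ln_le_pade) auto
  also have "\<dots> \<le> 1 - t - q"
  proof -
    have "(1 - t - q) * (q + 1) - 2 * (q - 1) = t^2 * (20 - t^2) / 400"
      by (simp add: q_def pade_threshold_def algebra_simps power2_eq_square eval_nat_numeral)
    moreover have "0 \<le> t^2 * (20 - t^2) / 400"
      using assms power_le_one[of t 2] by simp
    ultimately have "2 * (q - 1) \<le> (1 - t - q) * (q + 1)"
      by linarith
    then show ?thesis
      using q by (simp add: divide_simps)
  qed
  finally show ?thesis
    by (simp add: q_def)
qed

lemma pade_polynomial_ineq:
  fixes k t :: real
  assumes "3 \<le> k" "0 \<le> t" "t \<le> 1"
  shows "(10 - t) * (k - t) * (6 * k - 2 * t)
           \<le> (6 * k - 3 * k * t + 2 * t^2 - 5 * t) * (20 * k - 10 * t + t^2)"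
proof -
  have "k * (60 - 54 * t) \<ge> 3 * (60 - 54 * t)"
    using assms by (intro mult_right_mono) auto
  moreover have "t^3 \<le> t^2"
    using assms by (simp add: power_decreasing)
  moreover have "0 \<le> 180 - 242 * t + 65 * t^2"
  proof -
    have "65 * (t - 1)^2 = 65 * t^2 - 130 * t + 65"
      by (simp add: power2_eq_square algebra_simps)
    with assms zero_le_power2[of "t - 1"] show ?thesis
      by linarith
  qed
  ultimately have "0 \<le> k * (60 - 54 * t) - t * (80 - 68 * t + 3 * t^2)"
    by (simp add: algebra_simps power2_eq_square power3_eq_cube)
  then have "0 \<le> k * (k * (60 - 54 * t) - t * (80 - 68 * t + 3 * t^2))"
    using assms by simp
  moreover have "0 \<le> t^2 * (30 - 23 * t + 2 * t^2)"
    using assms by (intro mult_nonneg_nonneg) auto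
  ultimately show ?thesis
    by (simp add: algebra_simps power2_eq_square)
qed

lemma pade_rational_ineq:
  fixes k t :: real
  assumes "3 \<le> k" "0 \<le> t" "t \<le> 1"
  shows "(k - 1) * (t * (6 * k - 5 * t) / ((k - t) * (6 * k - 2 * t)))
           + t * (10 - t) / (20 * k - 10 * t + t^2) \<le> t"
proof -
  have k: "0 < k - t" "0 < 6 * k - 2 * t" "0 < 20 * k - 10 * t + t^2"
    using assms zero_le_power2[of t] by linarith+
  have "t * (10 - t) * ((k - t) * (6 * k - 2 * t))
      \<le> t * (6 * k - 3 * k * t + 2 * t^2 - 5 * t) * (20 * k - 10 * t + t^2)"
    using mult_left_mono[OF pade_polynomial_ineq[OF assms] assms(2)]
    by (simp add: algebra_simps)
  then have "t * (10 - t) / (20 * k - 10 * t + t^2)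
      \<le> t * (6 * k - 3 * k * t + 2 * t^2 - 5 * t) / ((k - t) * (6 * k - 2 * t))"
    using k by (simp add: divide_simps)
  also have "\<dots> = t - (k - 1) * (t * (6 * k - 5 * t) / ((k - t) * (6 * k - 2 * t)))"
    using k by (simp add: divide_simps) (simp add: algebra_simps power2_eq_square)
  finally show ?thesis
    by linarith
qed

lemma mult_ln_ratio_add_ln_ratio_le:
  fixes n t :: real
  assumes "2 \<le> n" "0 \<le> t" "t \<le> 1"
  shows "n * ln ((n + 1) / (n + 1 - t)) + ln ((n + 1) / (n + pade_threshold t)) \<le> t"
proof -
  define k where "k = n + 1"
  have k: "3 \<le> k" "0 < k - t" "0 < 6 * k - 2 * t"
    using assms by (auto simp: k_def)
  have "0 < 20 * k - 10 * t + t^2"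
    using k assms zero_le_power2[of t] by linarith
  note k = k this
  define y where "y = t / (k - t)"
  define z where "z = t * (10 - t) / (20 * k - 10 * t + t^2)"
  have "ln ((n + 1) / (n + 1 - t)) = ln (1 + y)"
    using k by (simp add: y_def k_def field_simps)
  also have "\<dots> \<le> y * (6 + y) / (6 + 4 * y)"
    using k assms by (intro ln_add_one_le_pade) (simp add: y_def)
  also have "\<dots> = y * ((6 * k - 5 * t) / (k - t)) / ((6 * k - 2 * t) / (k - t))"
    using k by (simp add: y_def field_simps)
  also have "\<dots> = t * (6 * k - 5 * t) / ((k - t) * (6 * k - 2 * t))"
    using k by (simp add: y_def divide_simps)
  finally have "n * ln ((n + 1) / (n + 1 - t)) \<le> n * (t * (6 * k - 5 * t) / ((k - t) * (6 * k - 2 * t)))"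
    using assms by (intro mult_left_mono) auto
  then have ln1: "n * ln ((n + 1) / (n + 1 - t))
      \<le> (k - 1) * (t * (6 * k - 5 * t) / ((k - t) * (6 * k - 2 * t)))"
    by (simp add: k_def)
  have "(n + 1) / (n + pade_threshold t) = 1 + z"
    using k by (simp add: z_def k_def pade_threshold_def field_simps)
      (simp add: algebra_simps power2_eq_square eval_nat_numeral)
  then have "ln ((n + 1) / (n + pade_threshold t)) = ln (1 + z)"
    by simp
  also have "\<dots> \<le> z"
    using k assms by (intro ln_add_one_self_le_self) (simp add: z_def)
  finally have ln2: "ln ((n + 1) / (n + pade_threshold t)) \<le> z" .
  show ?thesis
    using ln1 ln2 pade_rational_ineq[OF k(1) assms(2,3)] by (simp add: z_def)
qed

lemma mult_ln_ratio_add_ln_ratio_le_max: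
  fixes n t \<rho> :: real
  assumes "2 \<le> n" "0 \<le> t" "t \<le> 1" "0 < \<rho>"
  shows "n * ln ((n + 1) / (n + 1 - t)) + ln ((n + 1) / (n + \<rho>)) \<le> max t (1 - \<rho> - ln \<rho>)"
proof -
  define q where "q = pade_threshold t"
  have q: "1 / 2 \<le> q" "q \<le> 1"
    using pade_threshold_bounds[OF assms(2,3)] by (simp_all add: q_def)
  have main: "n * ln ((n + 1) / (n + 1 - t)) + ln ((n + 1) / (n + q)) \<le> t"
    unfolding q_def by (rule mult_ln_ratio_add_ln_ratio_le[OF assms(1-3)])
  show ?thesis
  proof (cases "q \<le> \<rho>")
    case True
    then have "ln ((n + 1) / (n + \<rho>)) \<le> ln ((n + 1) / (n + q))"
      using assms q by (intro ln_mono divide_left_mono) auto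
    with main show ?thesis
      by linarith
  next
    case False
    have "(n + q) * \<rho> \<le> q * (n + \<rho>)"
      using False assms mult_right_mono[of \<rho> q n] by (simp add: algebra_simps)
    then have "ln ((n + q) / (n + \<rho>)) \<le> ln (q / \<rho>)"
      using assms q by (intro ln_mono) (auto simp: divide_simps)
    moreover have "ln ((n + 1) / (n + \<rho>)) = ln ((n + 1) / (n + q)) + ln ((n + q) / (n + \<rho>))"
      using assms q by (simp add: ln_div)
    moreover have "ln (q / \<rho>) = ln q - ln \<rho>"
      using assms q by (simp add: ln_div)
    moreover have "ln q \<le> 1 - t - q"
      unfolding q_def using ln_pade_threshold_le[OF assms(2,3)] .
    ultimately show ?thesis
      using main False by linarith
  qed
qed

lemma ln_ratio_le_convex_comb:
  fixes n u v s x :: real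
  assumes "0 \<le> n" "0 < u" "0 < v" "0 \<le> s" "s \<le> 1" "(1 - s) * u + s * v \<le> x"
  shows "ln ((n + 1) / (n + x)) \<le> (1 - s) * ln ((n + 1) / (n + u)) + s * ln ((n + 1) / (n + v))"
proof -
  define y where "y = (1 - s) * u + s * v"
  have y: "0 < y"
    using assms by (cases "s = 1") (auto simp: y_def intro!: add_pos_nonneg)
  have "y \<le> x"
    using assms(6) by (simp add: y_def)
  have "(1 - s) * ln (n + u) + s * ln (n + v) \<le> ln ((1 - s) * (n + u) + s * (n + v))"
    using assms by (intro ln_convex_comb_ge) auto
  also have "(1 - s) * (n + u) + s * (n + v) = n + y"
    by (simp add: y_def algebra_simps)
  also have "ln (n + y) \<le> ln (n + x)"
    using assms y \<open>y \<le> x\<close> by simp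
  finally show ?thesis
    using assms y \<open>y \<le> x\<close> by (simp add: ln_div algebra_simps)
qed

lemma factor_args_ge_interpolation:
  fixes m M a z :: real
  assumes "0 < m" "m \<le> M" "M < 1" "a \<in> {m..M}" "z \<in> {m..M}"
  defines "s \<equiv> (a - m) / (M - m)"
  shows "(1 - s) * (m / M) + s * ((1 - M) / (1 - m)) \<le> a / z"
    and "(1 - s) * (m / M) + s * ((1 - M) / (1 - m)) \<le> (1 - a) / (1 - z)"
proof -
  have sM: "s * (M - m) = a - m"
    using assms(4) by (cases "m = M") (auto simp: s_def)
  have s: "0 \<le> s" "s \<le> 1"
    using assms(1-5) by (auto simp: s_def divide_simps)
  have p: "m / M \<le> 1" and r: "(1 - M) / (1 - m) \<le> 1"
    using assms(1-5) by auto
  have "(1 - s) * (m / M) + s * ((1 - M) / (1 - m)) \<le> (1 - s) * (m / M) + s"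
    using s r mult_left_mono[OF r s(1)] by simp
  also have "\<dots> = ((1 - s) * m + s * M) / M"
    using assms(1-5) by (simp add: field_simps)
  also have "(1 - s) * m + s * M = a"
    using sM by (simp add: algebra_simps)
  also have "a / M \<le> a / z"
    using assms(1-5) by (intro divide_left_mono) auto
  finally show "(1 - s) * (m / M) + s * ((1 - M) / (1 - m)) \<le> a / z" .
  have "(1 - s) * (m / M) + s * ((1 - M) / (1 - m)) \<le> (1 - s) + s * ((1 - M) / (1 - m))"
    using s p mult_left_mono[OF p, of "1 - s"] by simp
  also have "\<dots> = ((1 - s) * (1 - m) + s * (1 - M)) / (1 - m)"
    using assms(1-5) by (simp add: field_simps)
  also have "(1 - s) * (1 - m) + s * (1 - M) = 1 - a"
    using sM by (simp add: algebra_simps)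
  also have "(1 - a) / (1 - m) \<le> (1 - a) / (1 - z)"
    using assms(1-5) by (intro divide_left_mono) auto
  finally show "(1 - s) * (m / M) + s * ((1 - M) / (1 - m)) \<le> (1 - a) / (1 - z)" .
qed

lemma factor_product_pos_ln_le:
  fixes m M :: real and N :: nat and J :: "nat set" and a z :: "nat \<Rightarrow> real"
  assumes "0 < m" "m \<le> M" "M < 1" "J \<subseteq> {1..N}"
    and "\<forall>i\<in>{1..N}. a i \<in> {m..M}" "\<forall>i\<in>{1..N}. z i \<in> {m..M}"
  defines "n \<equiv> real N" and "K \<equiv> (\<Sum>i=1..N. (a i - m) / (M - m))"
  defines "P \<equiv> (\<Prod>i\<in>J. (n + 1) / (n + a i / z i))
                  * (\<Prod>i\<in>{1..N} - J. (n + 1) / (n + (1 - a i) / (1 - z i)))"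
  shows "0 < P"
    and "ln P \<le> (n - K) * ln ((n + 1) / (n + m / M)) + K * ln ((n + 1) / (n + (1 - M) / (1 - m)))"
proof -
  define s where "s i = (a i - m) / (M - m)" for i
  define h where "h i = (1 - s i) * ln ((n + 1) / (n + m / M))
                        + s i * ln ((n + 1) / (n + (1 - M) / (1 - m)))" for i
  define f where "f i = (n + 1) / (n + a i / z i)" for i
  define g where "g i = (n + 1) / (n + (1 - a i) / (1 - z i))" for i
  have s: "0 \<le> s i" "s i \<le> 1" if "i \<in> {1..N}" for i
    using assms(5) that by (auto simp: s_def divide_simps)
  have pos: "0 < f i" "0 < g i" if "i \<in> {1..N}" for i
  proof -
    have "m \<le> a i" "a i \<le> M" "m \<le> z i" "z i \<le> M"
      using assms(5,6) that by auto
    then have "0 < a i / z i" "0 < (1 - a i) / (1 - z i)"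
      using assms(1,3) by (auto intro!: divide_pos_pos)
    then show "0 < f i" "0 < g i"
      by (simp_all add: f_def g_def n_def add_nonneg_pos)
  qed
  have ln_f: "ln (f i) \<le> h i" and ln_g: "ln (g i) \<le> h i" if "i \<in> {1..N}" for i
  proof -
    have "a i \<in> {m..M}" "z i \<in> {m..M}"
      using assms(5,6) that by auto
    note interpolation = factor_args_ge_interpolation[OF assms(1-3) this, folded s_def]
    have "0 \<le> n" "0 < m / M" "0 < (1 - M) / (1 - m)"
      using assms(1-3) by (auto simp: n_def)
    then show "ln (f i) \<le> h i" "ln (g i) \<le> h i"
      unfolding f_def g_def h_def
      using ln_ratio_le_convex_comb[OF _ _ _ s[OF that] interpolation(1)]
        ln_ratio_le_convex_comb[OF _ _ _ s[OF that] interpolation(2)]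
      by auto
  qed
  have P: "P = prod f J * prod g ({1..N} - J)"
    by (simp add: P_def f_def g_def)
  have pos_f: "\<forall>i\<in>J. 0 < f i" and pos_g: "\<forall>i\<in>{1..N} - J. 0 < g i"
    using assms(4) pos by auto
  have prod_f: "0 < prod f J" and prod_g: "0 < prod g ({1..N} - J)"
    using pos_f pos_g by (auto intro!: prod_pos)
  then show "0 < P"
    unfolding P by simp
  have "ln P = ln (prod f J) + ln (prod g ({1..N} - J))"
    unfolding P using prod_f prod_g by (simp add: ln_mult_pos)
  also have "ln (prod f J) = (\<Sum>i\<in>J. ln (f i))"
    using assms(4) pos(1) finite_subset[OF assms(4)]
    by (intro ln_prod) (auto dest: less_imp_neq[symmetric] simp: subset_iff)
  also have "ln (prod g ({1..N} - J)) = (\<Sum>i\<in>{1..N} - J. ln (g i))"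
    using pos(2) by (intro ln_prod) (auto dest: less_imp_neq[symmetric])
  also have "(\<Sum>i\<in>J. ln (f i)) + (\<Sum>i\<in>{1..N} - J. ln (g i)) \<le> (\<Sum>i\<in>J. h i) + (\<Sum>i\<in>{1..N} - J. h i)"
    using assms(4) ln_f ln_g by (intro add_mono sum_mono) auto
  also have "\<dots> = (\<Sum>i=1..N. h i)"
    using sum.subset_diff[OF assms(4) finite_atLeastAtMost, of h] by linarith
  also have "\<dots> = (n - K) * ln ((n + 1) / (n + m / M)) + K * ln ((n + 1) / (n + (1 - M) / (1 - m)))"
    by (simp add: h_def K_def n_def s_def algebra_simps sum.distrib sum_subtractf
                  sum_distrib_left sum_distrib_right)
  finally show "ln P \<le> (n - K) * ln ((n + 1) / (n + m / M)) + K * ln ((n + 1) / (n + (1 - M) / (1 - m)))" .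
qed

lemma prefactor_convex_comb:
  fixes c m M :: real and N :: nat and a :: "nat \<Rightarrow> real"
  assumes "0 < N" "\<forall>i\<in>{1..N}. a i \<in> {m..M}"
  defines "n \<equiv> real N" and "K \<equiv> (\<Sum>i=1..N. (a i - m) / (M - m))"
  shows "0 \<le> K / n" "K / n \<le> 1"
    and "c + (1 - c) * ((m + (\<Sum>i=1..N. a i)) / (n + 1))
         = (1 - K / n) * (c + (1 - c) * m)
           + K / n * ((c + (1 - c) * m + n * (c + (1 - c) * M)) / (n + 1))"
proof -
  define \<theta> where "\<theta> = K / n"
  define v where "v = (m + n * M) / (n + 1)"
  have n: "0 < n"
    using assms(1) by (simp add: n_def)
  have s: "0 \<le> (a i - m) / (M - m)" "(a i - m) / (M - m) \<le> 1" if "i \<in> {1..N}" for i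
    using assms(2) that by (auto simp: divide_simps)
  have "0 \<le> K" "K \<le> n"
    using sum_nonneg[of "{1..N}", OF s(1)] sum_mono[of "{1..N}", OF s(2)] by (auto simp: K_def n_def)
  then show "0 \<le> K / n" "K / n \<le> 1"
    using n by (auto simp: divide_simps)
  have "a i = m + (M - m) * ((a i - m) / (M - m))" if "i \<in> {1..N}" for i
    using assms(2) that by (cases "m = M") auto
  then have "(\<Sum>i=1..N. a i) = (\<Sum>i=1..N. m + (M - m) * ((a i - m) / (M - m)))"
    by (rule sum.cong[OF refl])
  also have "\<dots> = (\<Sum>i=1..N. m) + (M - m) * K"
    by (simp only: sum.distrib sum_distrib_left K_def)
  finally have "(\<Sum>i=1..N. a i) = n * m + (M - m) * (\<theta> * n)"
    using n by (simp add: n_def \<theta>_def)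
  then have mean: "(m + (\<Sum>i=1..N. a i)) / (n + 1) = (1 - \<theta>) * m + \<theta> * v"
    using n unfolding v_def by (simp add: field_simps)
  have vertex: "(c + (1 - c) * m + n * (c + (1 - c) * M)) / (n + 1) = c + (1 - c) * v"
    using n by (simp add: v_def field_simps)
  show "c + (1 - c) * ((m + (\<Sum>i=1..N. a i)) / (n + 1))
      = (1 - K / n) * (c + (1 - c) * m)
        + K / n * ((c + (1 - c) * m + n * (c + (1 - c) * M)) / (n + 1))"
    unfolding \<theta>_def[symmetric] mean vertex by (simp add: algebra_simps)
qed

lemma ln_gfun_le_convex_comb:
  fixes \<epsilon> m M :: real and N :: nat and J :: "nat set" and a z :: "nat \<Rightarrow> real"
  assumes "0 < m" "m \<le> M" "M < 1" "0 \<le> \<epsilon>" "0 < N" "J \<subseteq> {1..N}"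
    and "\<forall>i\<in>{1..N}. a i \<in> {m..M}" "\<forall>i\<in>{1..N}. z i \<in> {m..M}"
  defines "n \<equiv> real N"
    and "w \<equiv> exp (-\<epsilon>) + (1 - exp (-\<epsilon>)) * m" and "W \<equiv> exp (-\<epsilon>) + (1 - exp (-\<epsilon>)) * M"
  obtains \<theta> where "0 \<le> \<theta>" "\<theta> \<le> 1"
    "ln (gfun \<epsilon> m J N a z) \<le> (1 - \<theta>) * (- ln w + n * ln ((n + 1) / (n + m / M)))
       + \<theta> * (- ln ((w + n * W) / (n + 1)) + n * ln ((n + 1) / (n + (1 - M) / (1 - m))))"
proof -
  define K where "K = (\<Sum>i=1..N. (a i - m) / (M - m))"
  define \<theta> where "\<theta> = K / n"
  define u where "u = (w + n * W) / (n + 1)"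
  define pref where "pref = exp (-\<epsilon>) + (1 - exp (-\<epsilon>)) * ((m + (\<Sum>i=1..N. a i)) / (n + 1))"
  define P where "P = (\<Prod>i\<in>J. (n + 1) / (n + a i / z i))
                     * (\<Prod>i\<in>{1..N} - J. (n + 1) / (n + (1 - a i) / (1 - z i)))"
  have n: "0 < n"
    using assms(5) by (simp add: n_def)
  have "0 < exp (-\<epsilon>)" "exp (-\<epsilon>) \<le> 1"
    using assms(4) by auto
  then have w: "0 < w" "0 < W"
    using assms(1,2) by (auto simp: w_def W_def intro!: add_pos_nonneg)
  then have u: "0 < u"
    using n by (auto simp: u_def intro!: divide_pos_pos add_pos_pos)
  have \<theta>: "0 \<le> \<theta>" "\<theta> \<le> 1" and pref: "pref = (1 - \<theta>) * w + \<theta> * u"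
    using prefactor_convex_comb(1,2)[OF assms(5,7)]
      prefactor_convex_comb(3)[OF assms(5,7), where c = "exp (-\<epsilon>)"]
    by (simp_all add: \<theta>_def K_def n_def pref_def u_def w_def W_def)
  have "0 < pref"
    using w u \<theta> by (cases "\<theta> = 1") (auto simp: pref intro!: add_pos_nonneg)
  have ln_pref: "(1 - \<theta>) * ln w + \<theta> * ln u \<le> ln pref"
    unfolding pref by (rule ln_convex_comb_ge[OF w(1) u \<theta>])
  have "0 < P" and ln_P: "ln P \<le> (n - \<theta> * n) * ln ((n + 1) / (n + m / M))
                                + \<theta> * n * ln ((n + 1) / (n + (1 - M) / (1 - m)))"
    using factor_product_pos_ln_le[OF assms(1-3,6-8)] n by (simp_all add: P_def \<theta>_def K_def n_def)
  have "gfun \<epsilon> m J N a z = inverse pref * P"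
    by (simp add: gfun_def pref_def P_def n_def)
  then have "ln (gfun \<epsilon> m J N a z) = - ln pref + ln P"
    using \<open>0 < pref\<close> \<open>0 < P\<close> by (simp add: ln_mult ln_inverse)
  also have "\<dots> \<le> (1 - \<theta>) * (- ln w + n * ln ((n + 1) / (n + m / M)))
       + \<theta> * (- ln u + n * ln ((n + 1) / (n + (1 - M) / (1 - m))))"
    using ln_pref ln_P by (simp add: algebra_simps)
  finally show ?thesis
    using that \<theta> by (simp add: u_def)
qed

lemma ln_upper_vertex_le_max:
  fixes n m M w W :: real
  assumes "2 \<le> n" "0 < m" "m \<le> M" "M < 1" "0 < w" "w \<le> W" "m * W \<le> M * w"
  shows "- ln ((w + n * W) / (n + 1)) + n * ln ((n + 1) / (n + (1 - M) / (1 - m)))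
         \<le> max (- ln W + (1 - (1 - M) / (1 - m))) (- ln w + (1 - m / M))"
proof -
  define t where "t = 1 - (1 - M) / (1 - m)"
  define \<rho> where "\<rho> = w / W"
  have t: "0 \<le> t" "t \<le> 1"
    using assms(2-4) by (auto simp: t_def)
  have \<rho>: "0 < \<rho>" "m / M \<le> \<rho>"
    using assms(2,3,5-7) by (auto simp: \<rho>_def divide_simps mult.commute)
  have "W \<noteq> 0"
    using assms(5,6) by linarith
  then have "W * (n + \<rho>) = w + n * W"
    by (simp add: \<rho>_def algebra_simps)
  then have "(w + n * W) / (n + 1) = W * ((n + \<rho>) / (n + 1))"
    by (metis times_divide_eq_right)
  then have "- ln ((w + n * W) / (n + 1)) = - ln W + ln ((n + 1) / (n + \<rho>))"
    using assms(1,5,6) \<rho> by (simp add: ln_mult_pos ln_div)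
  moreover have "n * ln ((n + 1) / (n + (1 - M) / (1 - m))) + ln ((n + 1) / (n + \<rho>))
      \<le> max t (1 - \<rho> - ln \<rho>)"
    using mult_ln_ratio_add_ln_ratio_le_max[OF assms(1) t \<rho>(1)] by (simp add: t_def)
  moreover have "ln w = ln W + ln \<rho>"
    using assms(5,6) by (simp add: \<rho>_def ln_div)
  then have "max t (1 - \<rho> - ln \<rho>) - ln W \<le> max (- ln W + t) (- ln w + (1 - m / M))"
    using \<rho>(2) by (auto simp: max_def)
  ultimately show ?thesis
    unfolding t_def by linarith
qed

lemma gfun_le_max:
  fixes \<epsilon> m M :: real and N :: nat and J :: "nat set" and a z :: "nat \<Rightarrow> real"
  assumes "0 < m" "m \<le> M" "M < 1" "0 \<le> \<epsilon>" "1 < N" "J \<subseteq> {1..N}"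
    and "\<forall>i\<in>{1..N}. a i \<in> {m..M}" "\<forall>i\<in>{1..N}. z i \<in> {m..M}"
  shows "gfun \<epsilon> m J N a z
    \<le> max (inverse (exp (-\<epsilon>) + (1 - exp (-\<epsilon>)) * M) * exp (1 - (1 - M) / (1 - m)))
          (inverse (exp (-\<epsilon>) + (1 - exp (-\<epsilon>)) * m) * exp (1 - m / M))"
    (is "_ \<le> max ?A ?B")
proof -
  define n where "n = real N"
  define w where "w = exp (-\<epsilon>) + (1 - exp (-\<epsilon>)) * m"
  define W where "W = exp (-\<epsilon>) + (1 - exp (-\<epsilon>)) * M"
  obtain \<theta> where \<theta>: "0 \<le> \<theta>" "\<theta> \<le> 1" and ln_g:
    "ln (gfun \<epsilon> m J N a z) \<le> (1 - \<theta>) * (- ln w + n * ln ((n + 1) / (n + m / M)))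
       + \<theta> * (- ln ((w + n * W) / (n + 1)) + n * ln ((n + 1) / (n + (1 - M) / (1 - m))))"
    using ln_gfun_le_convex_comb[OF assms(1-4) _ assms(6-8)] assms(5) unfolding n_def w_def W_def by auto
  have n: "2 \<le> n"
    using assms(5) by (simp add: n_def)
  have "0 < exp (-\<epsilon>)" "exp (-\<epsilon>) \<le> 1"
    using assms(4) by auto
  then have w: "0 < w" "w \<le> W"
    using assms(1,2) by (auto simp: w_def W_def intro!: add_pos_nonneg mult_left_mono)
  have "m * exp (-\<epsilon>) \<le> M * exp (-\<epsilon>)"
    using assms(2) by simp
  then have "m * W \<le> M * w"
    by (simp add: w_def W_def algebra_simps)
  have AB: "0 < ?A" "0 < ?B"
    using w by (simp_all add: w_def W_def)
  have ln_A: "ln ?A = - ln W + (1 - (1 - M) / (1 - m))" and ln_B: "ln ?B = - ln w + (1 - m / M)"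
    using w by (simp_all add: ln_mult_pos ln_inverse W_def w_def)
  have "- ln w + n * ln ((n + 1) / (n + m / M)) \<le> max (ln ?A) (ln ?B)"
    unfolding ln_B using mult_ln_ratio_le[of n "m / M"] n assms(1,2) by (simp add: le_max_iff_disj)
  moreover have "- ln ((w + n * W) / (n + 1)) + n * ln ((n + 1) / (n + (1 - M) / (1 - m)))
      \<le> max (ln ?A) (ln ?B)"
    unfolding ln_A ln_B by (rule ln_upper_vertex_le_max[OF n assms(1-3) w \<open>m * W \<le> M * w\<close>])
  ultimately have "ln (gfun \<epsilon> m J N a z) \<le> max (ln ?A) (ln ?B)"
    using convex_bound_le[of _ "max (ln ?A) (ln ?B)" _ "1 - \<theta>" \<theta>] \<theta> ln_g by fastforce
  also have "\<dots> = ln (max ?A ?B)"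
    using AB by (auto simp: max_def)
  finally show ?thesis
    using AB by (cases "0 < gfun \<epsilon> m J N a z") (auto simp: max_def)
qed

lemma gfun_constant_vectors:
  assumes "J \<subseteq> {1..N}"
  shows "gfun \<epsilon> m J N (\<lambda>_. \<alpha>) (\<lambda>_. \<zeta>)
    = inverse (exp (-\<epsilon>) + (1 - exp (-\<epsilon>)) * ((m + real N * \<alpha>) / (real N + 1)))
      * ((real N + 1) / (real N + \<alpha> / \<zeta>)) ^ card J
      * ((real N + 1) / (real N + (1 - \<alpha>) / (1 - \<zeta>))) ^ (N - card J)"
  using assms by (simp add: gfun_def card_Diff_subset finite_subset)

lemma gfun_constant_vectors_in_gvals:
  assumes "1 < N" "J \<subseteq> {1..N}" "\<alpha> \<in> {m..M}" "\<zeta> \<in> {m..M}"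
  shows "gfun \<epsilon> m J N (\<lambda>_. \<alpha>) (\<lambda>_. \<zeta>) \<in> gvals \<epsilon> m M"
  using assms unfolding gvals_def by blast

lemma tendsto_ratio_power:
  "0 < x \<Longrightarrow> (\<lambda>n. ((real n + 1) / (real n + x)) ^ n) \<longlonglongrightarrow> exp (1 - x)"
  by real_asymp

lemma tendsto_gfun_constant_vectors:
  fixes \<epsilon> m \<alpha> \<zeta> :: real
  defines "c \<equiv> exp (-\<epsilon>)"
  assumes "c + (1 - c) * \<alpha> \<noteq> 0"
  shows "0 < \<alpha> / \<zeta> \<Longrightarrow> (\<lambda>N. gfun \<epsilon> m {1..N} N (\<lambda>_. \<alpha>) (\<lambda>_. \<zeta>))
           \<longlonglongrightarrow> inverse (c + (1 - c) * \<alpha>) * exp (1 - \<alpha> / \<zeta>)"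
    and "0 < (1 - \<alpha>) / (1 - \<zeta>) \<Longrightarrow> (\<lambda>N. gfun \<epsilon> m {} N (\<lambda>_. \<alpha>) (\<lambda>_. \<zeta>))
           \<longlonglongrightarrow> inverse (c + (1 - c) * \<alpha>) * exp (1 - (1 - \<alpha>) / (1 - \<zeta>))"
proof -
  have "(\<lambda>N. (m + real N * \<alpha>) / (real N + 1)) \<longlonglongrightarrow> \<alpha>"
    by real_asymp
  then have prefactor: "(\<lambda>N. inverse (c + (1 - c) * ((m + real N * \<alpha>) / (real N + 1))))
      \<longlonglongrightarrow> inverse (c + (1 - c) * \<alpha>)"
    using assms(2) by (intro tendsto_intros) auto
  have "gfun \<epsilon> m {1..N} N (\<lambda>_. \<alpha>) (\<lambda>_. \<zeta>)
      = inverse (c + (1 - c) * ((m + real N * \<alpha>) / (real N + 1)))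
        * ((real N + 1) / (real N + \<alpha> / \<zeta>)) ^ N" for N
    using gfun_constant_vectors[OF order_refl, of \<epsilon> m N \<alpha> \<zeta>] by (simp add: c_def)
  then show "0 < \<alpha> / \<zeta> \<Longrightarrow> (\<lambda>N. gfun \<epsilon> m {1..N} N (\<lambda>_. \<alpha>) (\<lambda>_. \<zeta>))
      \<longlonglongrightarrow> inverse (c + (1 - c) * \<alpha>) * exp (1 - \<alpha> / \<zeta>)"
    using tendsto_mult[OF prefactor tendsto_ratio_power] by presburger
  have "gfun \<epsilon> m {} N (\<lambda>_. \<alpha>) (\<lambda>_. \<zeta>)
      = inverse (c + (1 - c) * ((m + real N * \<alpha>) / (real N + 1)))
        * ((real N + 1) / (real N + (1 - \<alpha>) / (1 - \<zeta>))) ^ N" for N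
    using gfun_constant_vectors[OF empty_subsetI, of \<epsilon> m N \<alpha> \<zeta>] by (simp add: c_def)
  then show "0 < (1 - \<alpha>) / (1 - \<zeta>) \<Longrightarrow> (\<lambda>N. gfun \<epsilon> m {} N (\<lambda>_. \<alpha>) (\<lambda>_. \<zeta>))
      \<longlonglongrightarrow> inverse (c + (1 - c) * \<alpha>) * exp (1 - (1 - \<alpha>) / (1 - \<zeta>))"
    using tendsto_mult[OF prefactor tendsto_ratio_power] by presburger
qed

lemma tendsto_le_cSup:
  fixes S :: "real set"
  assumes "bdd_above S" "eventually (\<lambda>n. f n \<in> S) sequentially" "f \<longlonglongrightarrow> L"
  shows "L \<le> Sup S"
  using assms
  by (intro tendsto_upperbound[OF assms(3)]) (auto elim!: eventually_mono intro: cSup_upper)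

theorem theorem6:
  fixes m M \<epsilon> :: real
  assumes "m \<in> mgrid" and "M \<in> mgrid" and "m \<le> M" and "\<epsilon> \<in> eps_grid"
  shows "bdd_above (gvals \<epsilon> m M) \<and>
         Sup (gvals \<epsilon> m M) =
           max (inverse (exp (-\<epsilon>) + (1 - exp (-\<epsilon>)) * M) * exp (1 - (1 - M) / (1 - m)))
               (inverse (exp (-\<epsilon>) + (1 - exp (-\<epsilon>)) * m) * exp (1 - m / M))"
    (is "_ \<and> _ = max ?A ?B")
proof -
  have m: "0 < m" "m \<le> M" "M < 1" and "0 \<le> \<epsilon>"
    using assms by (auto simp: mgrid_def eps_grid_def)
  then have pos: "0 < exp (-\<epsilon>) + (1 - exp (-\<epsilon>)) * x" if "0 < x" for x
    using that by (intro add_pos_nonneg) auto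
  have upper: "x \<le> max ?A ?B" if "x \<in> gvals \<epsilon> m M" for x
    using that gfun_le_max[OF m \<open>0 \<le> \<epsilon>\<close>] unfolding gvals_def by auto
  then have bdd: "bdd_above (gvals \<epsilon> m M)"
    by (rule bdd_aboveI)
  have A_lim: "(\<lambda>N. gfun \<epsilon> m {} N (\<lambda>_. M) (\<lambda>_. m)) \<longlonglongrightarrow> ?A"
    using m pos[of M] by (intro tendsto_gfun_constant_vectors(2)) auto
  have B_lim: "(\<lambda>N. gfun \<epsilon> m {1..N} N (\<lambda>_. m) (\<lambda>_. M)) \<longlonglongrightarrow> ?B"
    using m pos[of m] by (intro tendsto_gfun_constant_vectors(1)) auto
  have "?A \<le> Sup (gvals \<epsilon> m M)"
    using m by (intro tendsto_le_cSup[OF bdd _ A_lim] eventually_sequentiallyI[of 2]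
      gfun_constant_vectors_in_gvals) auto
  moreover have "?B \<le> Sup (gvals \<epsilon> m M)"
    using m by (intro tendsto_le_cSup[OF bdd _ B_lim] eventually_sequentiallyI[of 2]
      gfun_constant_vectors_in_gvals) auto
  moreover have "Sup (gvals \<epsilon> m M) \<le> max ?A ?B"
    using upper m gfun_constant_vectors_in_gvals[of 2 "{}" m m M] by (intro cSup_least) auto
  ultimately show ?thesis
    using bdd by linarith
qed

end
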